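(* Let $q$ be a positive integer, $Z>0$, $\gamma:=(6\pi^2/q)^{2/3}$. For non-negative $\tilde\tau\in L^{3/2}(\mathbb{R}^3,(1+\xi^2)\mathrm{d}\xi)$ define $\mathcal{E}_s(\tilde\tau):=\mathcal{E}_{\mathrm{mTF}}(\tilde\tau^{3/2})$. Then $\mathcal{E}_s$ is strictly convex on this (convex) set of functions.
   Context: $\mathcal{E}_{\mathrm{mTF}}(\tau)=\int_{\mathbb{R}^3}\xi^2\tau(\xi)\,\mathrm{d}\xi-\tfrac32\gamma^{-1/2}Z\int_{\mathbb{R}^3}\tau(\xi)^{2/3}\,\mathrm{d}\xi+\tfrac34\gamma^{-1/2}\iint\big(\tau_<(\xi,\xi')\tau_>(\xi,\xi')^{2/3}-\tfrac15\tau_<(\xi,\xi')^{5/3}\big)\mathrm{d}\xi\,\mathrm{d}\xi'$, with $\tau_<=\min\{\tau(\xi),\tau(\xi')\}$, $\tau_>=\max\{\tau(\xi),\tau(\xi')\}$. $L^{3/2}(\mathbb{R}^3,(1+\xi^2)\mathrm{d}\xi)$ denotes functions with $\int(1+\xi^2)|\tilde\tau|^{3/2}\,\mathrm{d}\xi<\infty$. *)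

theory Defs
  imports "HOL-Analysis.Analysis"
begin

definition gamma_q :: "nat \<Rightarrow> real" where
  "gamma_q q = (6 * pi^2 / real q) powr (2/3)"

text \<open>The modified Thomas-Fermi functional, with tau_< = min, tau_> = max.\<close>
definition E_mTF :: "nat \<Rightarrow> real \<Rightarrow> (real^3 \<Rightarrow> real) \<Rightarrow> real" where
  "E_mTF q Z \<tau> =
     (\<integral>\<xi>. (norm \<xi>)^2 * \<tau> \<xi> \<partial>lborel)
     - 3/2 * gamma_q q powr (-1/2) * Z * (\<integral>\<xi>. \<tau> \<xi> powr (2/3) \<partial>lborel)
     + 3/4 * gamma_q q powr (-1/2) *
       (\<integral>p. (min (\<tau> (fst p)) (\<tau> (snd p)) * max (\<tau> (fst p)) (\<tau> (snd p)) powr (2/3)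
              - 1/5 * min (\<tau> (fst p)) (\<tau> (snd p)) powr (5/3)) \<partial>(lborel \<Otimes>\<^sub>M lborel))"

definition E_s :: "nat \<Rightarrow> real \<Rightarrow> (real^3 \<Rightarrow> real) \<Rightarrow> real" where
  "E_s q Z t = E_mTF q Z (\<lambda>\<xi>. t \<xi> powr (3/2))"

text \<open>Non-negative elements of L^{3/2}(R^3, (1+xi^2) dxi) (non-negative representatives).\<close>
definition admissible :: "(real^3 \<Rightarrow> real) \<Rightarrow> bool" where
  "admissible t \<longleftrightarrow> t \<in> borel_measurable lborel \<and> (\<forall>\<xi>. 0 \<le> t \<xi>) \<and>
     integrable lborel (\<lambda>\<xi>. (1 + (norm \<xi>)^2) * \<bar>t \<xi>\<bar> powr (3/2))"

end

theory Submission
  imports Defs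
begin

text \<open>
  In the variable t = tau^(2/3) the functional reads
  E_s(t) = \<integral> |xi|^2 t^(3/2) - c Z \<integral> t + c' \<integral>\<integral> h(t(x), t(y)),  with c, c' \<ge> 0 and
  h(a, b) = min(a,b)^(3/2) max(a,b) - min(a,b)^(5/2) / 5.
  The kinetic term is strictly convex because x^(3/2) is and |xi|^2 > 0 almost everywhere.
  The middle term is linear; it is finite because t \<le> (1 + |xi|^2) t^(3/2) + (1 + |xi|^2)^(-2)
  and the last function is integrable on R^3.
  The exchange term is convex by a layer-cake argument: h(a, b) = 3/4 \<integral> (a - u^2)_+ (b - u^2)_+ du,
  hence \<integral>\<integral> h(t(x), t(y)) = 3/4 \<integral> G_t(u)^2 du with G_t(u) = \<integral> (t(x) - u^2)_+ dx.
  Each G_t(u) is convex in t and nonnegative, so its square is convex as well.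
\<close>

lemma powr_three_halves: "0 \<le> x \<Longrightarrow> x powr (3/2) = x * sqrt (x::real)"
  using powr_mult_base[of x "1/2"] by (cases "x = 0") (auto simp: powr_half_sqrt)

lemma powr_five_halves: "0 \<le> x \<Longrightarrow> x powr (5/2) = x^2 * sqrt (x::real)"
  using powr_add[of x 2 "1/2"] by (cases "x = 0") (auto simp: powr_half_sqrt)

lemma powr_three_halves_tangent_remainder:
  fixes a m :: real assumes "0 \<le> a" "0 \<le> m"
  shows "a powr (3/2)
    = m powr (3/2) + 3/2 * sqrt m * (a - m) + (sqrt a - sqrt m)^2 * (sqrt a + sqrt m / 2)"
proof -
  obtain u v where "0 \<le> u" "0 \<le> v" "a = u^2" "m = v^2"
    using assms by (metis real_sqrt_pow2 real_sqrt_ge_zero)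
  then show ?thesis
    by (simp add: powr_three_halves power2_eq_square field_simps)
qed

lemma powr_three_halves_strict_convex:
  fixes a b s :: real
  assumes "0 \<le> a" "0 \<le> b" "a \<noteq> b" "0 < s" "s < 1"
  shows "(s*a + (1-s)*b) powr (3/2) < s * a powr (3/2) + (1-s) * b powr (3/2)"
proof -
  define m where "m = s*a + (1-s)*b"
  have "0 \<le> m" using assms by (simp add: m_def)
  define R where "R x = (sqrt x - sqrt m)^2 * (sqrt x + sqrt m / 2)" for x
  have "a - m = (1-s) * (a-b)" by (simp add: m_def algebra_simps)
  then have "a \<noteq> m" using assms by auto
  then have "sqrt a \<noteq> sqrt m" by simp
  moreover have "0 < sqrt a + sqrt m / 2"
    using \<open>sqrt a \<noteq> sqrt m\<close> real_sqrt_ge_zero[OF assms(1)] real_sqrt_ge_zero[OF \<open>0 \<le> m\<close>]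
    by linarith
  ultimately have "0 < R a" unfolding R_def by (intro mult_pos_pos) auto
  have "0 \<le> R b" using \<open>0 \<le> m\<close> assms by (simp add: R_def)
  have "s * (a - m) + (1-s) * (b - m) = 0" by (simp add: m_def algebra_simps)
  have "s * a powr (3/2) + (1-s) * b powr (3/2)
      = s * (m powr (3/2) + 3/2 * sqrt m * (a - m) + R a)
        + (1-s) * (m powr (3/2) + 3/2 * sqrt m * (b - m) + R b)"
    using powr_three_halves_tangent_remainder[OF assms(1) \<open>0 \<le> m\<close>]
      powr_three_halves_tangent_remainder[OF assms(2) \<open>0 \<le> m\<close>]
    unfolding R_def by simp
  also have "\<dots> = m powr (3/2) + 3/2 * sqrt m * (s * (a - m) + (1-s) * (b - m)) + s * R a + (1-s) * R b"
    by (simp add: field_simps)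
  finally have "s * a powr (3/2) + (1-s) * b powr (3/2) = m powr (3/2) + s * R a + (1-s) * R b"
    using \<open>s * (a - m) + (1-s) * (b - m) = 0\<close> by simp
  moreover have "0 < s * R a" "0 \<le> (1-s) * R b"
    using \<open>0 < R a\<close> \<open>0 \<le> R b\<close> assms by simp_all
  ultimately show ?thesis unfolding m_def by linarith
qed

lemma powr_three_halves_convex:
  fixes a b s :: real
  assumes "0 \<le> a" "0 \<le> b" "0 \<le> s" "s \<le> 1"
  shows "(s*a + (1-s)*b) powr (3/2) \<le> s * a powr (3/2) + (1-s) * b powr (3/2)"
proof -
  consider "a = b" | "s = 0" | "s = 1" | "a \<noteq> b" "0 < s" "s < 1" using assms by linarith
  then show ?thesis
  proof cases
    case 4
    then show ?thesis using powr_three_halves_strict_convex[OF assms(1,2)] by (simp add: less_imp_le)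
  qed (auto simp: algebra_simps)
qed

lemma le_powr_three_halves_plus_inverse_square:
  fixes t w :: real assumes "0 \<le> t" "0 < w"
  shows "t \<le> w * t powr (3/2) + 1 / w^2"
proof (cases "t \<le> 1 / w^2")
  case True then show ?thesis using assms by (simp add: add_increasing)
next
  case False
  then have "1 / w < sqrt t"
    using assms real_sqrt_less_mono[of "1 / w^2" t] by (simp add: real_sqrt_divide)
  then have "t \<le> w * t powr (3/2)"
    using assms mult_left_mono[of 1 "w * sqrt t" t] by (simp add: powr_three_halves field_simps)
  then show ?thesis using assms by (simp add: add_increasing2)
qed

subsection \<open>An integrable weight on low-dimensional spaces\<close>

lemma inverse_one_plus_square_squared_le:
  fixes r :: real assumes "2^k \<le> r"
  shows "1 / (1 + r^2)^2 \<le> 1 / 16^k"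
proof -
  have "(16::real)^k = ((2^k)^2)^2"
    by (simp add: power2_eq_square flip: power_mult_distrib)
  also have "\<dots> \<le> (1 + r^2)^2"
  proof -
    have "(2^k)^2 \<le> r^2" using assms by (intro power_mono) auto
    then show ?thesis by (intro power_mono) auto
  qed
  moreover have "0 < 1 + r^2" by (simp add: add_pos_nonneg)
  ultimately show ?thesis by (intro divide_left_mono) auto
qed

lemma inverse_one_plus_square_squared_dyadic:
  fixes r :: real
  shows "\<exists>k. r < 2^k \<and> 1 / (1 + r^2)^2 \<le> 16 / 16^k"
proof -
  obtain n where "r < 2^n" using real_arch_pow[of 2 r] by auto
  then show ?thesis
  proof (induction n)
    case 0
    have "1 / (1 + r^2)^2 \<le> 1" by (simp add: divide_le_eq_1 one_le_power)
    then show ?case using 0 by (intro exI[of _ 0]) simp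
  next
    case (Suc n)
    show ?case
    proof (cases "r < 2^n")
      case False
      then have "1 / (1 + r^2)^2 \<le> 16 / 16^Suc n"
        using inverse_one_plus_square_squared_le[of n r] by simp
      then show ?thesis using Suc.prems by blast
    qed (rule Suc.IH)
  qed
qed

text \<open>
  The weight is dominated by \<Sum>k. 16^(1-k) * indicator of the ball of radius 2^k, and in dimension
  at most 3 these balls grow at most like 8^k, so the bound has a convergent geometric integral.
\<close>

lemma integrable_inverse_one_plus_norm_square_squared:
  assumes "DIM('a::euclidean_space) \<le> 3"
  shows "integrable lborel (\<lambda>\<xi>::'a. 1 / (1 + (norm \<xi>)^2)^2)"
proof -
  define V where "V = measure lborel (ball (0::'a) 1)"
  have "0 \<le> V" by (simp add: V_def)
  define g where "g k \<xi> = ennreal (16 / 16^k) * indicator (ball (0::'a) (2^k)) \<xi>" for k \<xi>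
  have le_sum: "ennreal (1 / (1 + (norm \<xi>)^2)^2) \<le> (\<Sum>k. g k \<xi>)" for \<xi>
  proof -
    obtain k where k: "norm \<xi> < 2^k" "1 / (1 + (norm \<xi>)^2)^2 \<le> 16 / 16^k"
      using inverse_one_plus_square_squared_dyadic by blast
    then have "ennreal (1 / (1 + (norm \<xi>)^2)^2) \<le> g k \<xi>"
      by (simp add: g_def ennreal_leI)
    also have "\<dots> \<le> (\<Sum>k. g k \<xi>)"
      using sum_le_suminf[OF summableI, of "{k}" "\<lambda>k. g k \<xi>"] by simp
    finally show ?thesis .
  qed
  have ball_integral: "integral\<^sup>N lborel (g k) \<le> ennreal (16 * V * (1/2)^k)" for k
  proof -
    have "emeasure lborel (ball (0::'a) (2^k)) = ennreal ((2^k)^DIM('a) * V)"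
      using emeasure_lborel_ball_finite[of "0::'a" "2^k"] content_ball_conv_unit_ball[of "2^k" "0::'a"]
      by (simp add: emeasure_eq_ennreal_measure V_def)
    then have "integral\<^sup>N lborel (g k) = ennreal (16 / 16^k) * ennreal ((2^k)^DIM('a) * V)"
      unfolding g_def by (subst nn_integral_cmult_indicator) auto
    also have "\<dots> = ennreal (16 * V * ((2^k)^DIM('a) / 16^k))"
      using \<open>0 \<le> V\<close> by (simp add: ennreal_mult[symmetric] field_simps)
    also have "\<dots> \<le> ennreal (16 * V * (1/2)^k)"
    proof (intro ennreal_leI mult_left_mono)
      have "((2::real)^k)^DIM('a) \<le> (2^k)^3" using assms by (intro power_increasing) auto
      also have "\<dots> = 16^k * (1/2)^k"
        by (simp add: power3_eq_cube flip: power_mult_distrib)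
      finally show "(2^k)^DIM('a) / 16^k \<le> (1/2::real)^k" by (simp add: divide_le_eq mult.commute)
    qed (use \<open>0 \<le> V\<close> in simp)
    finally show ?thesis .
  qed
  have "(\<integral>\<^sup>+\<xi>. ennreal (1 / (1 + (norm (\<xi>::'a))^2)^2) \<partial>lborel) \<le> (\<integral>\<^sup>+\<xi>. (\<Sum>k. g k \<xi>) \<partial>lborel)"
    by (rule nn_integral_mono) (rule le_sum)
  also have "\<dots> = (\<Sum>k. integral\<^sup>N lborel (g k))"
    unfolding g_def
    by (intro nn_integral_suminf borel_measurable_times_ennreal borel_measurable_const
        borel_measurable_indicator) simp
  also have "\<dots> \<le> (\<Sum>k. ennreal (16 * V * (1/2)^k))"
    by (intro suminf_le ball_integral summableI)
  also have "\<dots> = ennreal (\<Sum>k. 16 * V * (1/2)^k)"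
    using \<open>0 \<le> V\<close> by (intro suminf_ennreal2) (auto intro: summable_mult summable_geometric)
  also have "\<dots> < \<infinity>" by simp
  finally show ?thesis by (intro integrableI_nonneg) auto
qed

subsection \<open>The exchange kernel and its layer-cake representation\<close>

definition exchange_kernel :: "real \<Rightarrow> real \<Rightarrow> real" where
  "exchange_kernel a b = min a b powr (3/2) * max a b - 1/5 * min a b powr (5/2)"

lemma measurable_exchange_kernel [measurable (raw)]:
  assumes [measurable]: "f \<in> borel_measurable M" "g \<in> borel_measurable M"
  shows "(\<lambda>x. exchange_kernel (f x) (g x)) \<in> borel_measurable M"
  unfolding exchange_kernel_def by measurable

lemma exchange_kernel_commute: "exchange_kernel a b = exchange_kernel b a"
  by (simp add: exchange_kernel_def min.commute max.commute)

lemma min_max_powr_eq_exchange_kernel: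
  fixes a b :: real assumes "0 \<le> a" "0 \<le> b"
  shows "min (a powr (3/2)) (b powr (3/2)) * max (a powr (3/2)) (b powr (3/2)) powr (2/3)
       - 1/5 * min (a powr (3/2)) (b powr (3/2)) powr (5/3) = exchange_kernel a b"
proof -
  have mono: "min (a powr (3/2)) (b powr (3/2)) = min a b powr (3/2)"
    "max (a powr (3/2)) (b powr (3/2)) = max a b powr (3/2)"
    using assms powr_mono2[of "3/2" a b] powr_mono2[of "3/2" b a] by (auto simp: min_def max_def)
  show ?thesis
    using assms unfolding mono exchange_kernel_def by (simp add: powr_powr)
qed

lemma exchange_kernel_nonneg:
  assumes "0 \<le> a" "0 \<le> b" shows "0 \<le> exchange_kernel a b"
proof -
  have "min a b powr (5/2) = min a b powr (3/2) * min a b"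
    using assms powr_add[of "min a b" "3/2" 1] by simp
  also have "\<dots> \<le> min a b powr (3/2) * max a b" by (intro mult_left_mono) auto
  moreover have "0 \<le> min a b powr (3/2) * max a b" using assms by simp
  ultimately show ?thesis by (simp add: exchange_kernel_def)
qed

lemma exchange_kernel_le:
  assumes "0 \<le> a" "0 \<le> b"
  shows "exchange_kernel a b \<le> a powr (3/2) * b + b powr (3/2) * a"
proof -
  have "exchange_kernel a b \<le> min a b powr (3/2) * max a b"
    by (simp add: exchange_kernel_def)
  moreover have "min a b powr (3/2) * max a b \<le> a powr (3/2) * b
      \<or> min a b powr (3/2) * max a b \<le> b powr (3/2) * a"
    by (cases "a \<le> b") (simp_all add: min_absorb1 max_absorb2 min_absorb2 max_absorb1)
  moreover have "0 \<le> a powr (3/2) * b" "0 \<le> b powr (3/2) * a" using assms by simp_all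
  ultimately show ?thesis by linarith
qed

lemma exchange_kernel_layer_integral:
  fixes a b :: real assumes "0 \<le> a" "0 \<le> b"
  shows "(\<integral>\<^sup>+u. ennreal (max 0 (a - u^2) * max 0 (b - u^2)) \<partial>lborel)
    = ennreal (4/3 * exchange_kernel a b)"
  using assms
proof (induction a b rule: linorder_wlog)
  case (sym a b)
  then show ?case by (simp add: exchange_kernel_commute mult.commute)
next
  case (le a b)
  define r where "r = sqrt a"
  have r: "0 \<le> r" "r^2 = a" using le by (auto simp: r_def)
  have u_le_r: "u^2 \<le> a \<longleftrightarrow> u \<in> {-r..r}" for u
    using r real_sqrt_le_iff[of "u^2" a] by (auto simp: r_def abs_le_iff)
  define F where "F u = a*b*u - (a+b)*u^3/3 + u^5/5" for u :: real
  define f where "f u = (a - u^2) * (b - u^2)" for u :: real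
  have "(f has_integral (F r - F (-r))) {-r..r}"
  proof (rule fundamental_theorem_of_calculus)
    fix x assume "x \<in> {-r..r}"
    have "(F has_real_derivative f x) (at x within {-r..r})"
      unfolding F_def f_def by (auto intro!: derivative_eq_intros simp: algebra_simps eval_nat_numeral)
    then show "(F has_vector_derivative f x) (at x within {-r..r})"
      by (simp add: has_real_derivative_iff_has_vector_derivative)
  qed (use r in simp)
  moreover have "0 \<le> f u" if "u \<in> {-r..r}" for u
    using that le u_le_r[of u] by (simp add: f_def)
  ultimately have integral:
    "(\<integral>\<^sup>+u. ennreal (indicator {-r..r} u * f u) \<partial>lborel) = ennreal (F r - F (-r))"
    by (intro nn_integral_has_integral_lebesgue) auto
  have "max 0 (a - u^2) * max 0 (b - u^2) = indicator {-r..r} u * f u" for u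
    using le u_le_r[of u] by (auto simp: f_def indicator_def)
  then have "(\<integral>\<^sup>+u. ennreal (max 0 (a - u^2) * max 0 (b - u^2)) \<partial>lborel) = ennreal (F r - F (-r))"
    by (simp only: integral)
  also have "F r - F (-r) = 4/3 * exchange_kernel a b"
  proof -
    have "r^3 = a * r" "r^5 = a^2 * r" using r by (simp_all flip: r(2) add: eval_nat_numeral)
    moreover have "exchange_kernel a b = a * r * b - 1/5 * a^2 * r"
      using le by (simp add: exchange_kernel_def r_def powr_three_halves powr_five_halves)
    ultimately show ?thesis by (simp add: F_def field_simps power2_eq_square)
  qed
  finally show ?case .
qed

subsection \<open>Convexity of the exchange energy\<close>

lemma (in pair_sigma_finite) nn_integral_fst_snd_mult:
  assumes [measurable]: "f \<in> borel_measurable M1" "g \<in> borel_measurable M2"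
  shows "(\<integral>\<^sup>+p. f (fst p) * g (snd p) \<partial>(M1 \<Otimes>\<^sub>M M2)) = (\<integral>\<^sup>+x. f x \<partial>M1) * (\<integral>\<^sup>+y. g y \<partial>M2)"
proof -
  have "(\<integral>\<^sup>+p. f (fst p) * g (snd p) \<partial>(M1 \<Otimes>\<^sub>M M2)) = (\<integral>\<^sup>+x. \<integral>\<^sup>+y. f x * g y \<partial>M2 \<partial>M1)"
    by (subst M2.nn_integral_fst[symmetric]) auto
  also have "\<dots> = (\<integral>\<^sup>+x. f x * (\<integral>\<^sup>+y. g y \<partial>M2) \<partial>M1)"
    by (intro nn_integral_cong nn_integral_cmult) measurable
  also have "\<dots> = (\<integral>\<^sup>+x. f x \<partial>M1) * (\<integral>\<^sup>+y. g y \<partial>M2)"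
    by (rule nn_integral_multc) measurable
  finally show ?thesis .
qed

definition excess_mass :: "('a::euclidean_space \<Rightarrow> real) \<Rightarrow> real \<Rightarrow> ennreal" where
  "excess_mass t u = (\<integral>\<^sup>+x. ennreal (max 0 (t x - u^2)) \<partial>lborel)"

definition nn_exchange_energy :: "('a::euclidean_space \<Rightarrow> real) \<Rightarrow> ennreal" where
  "nn_exchange_energy t = (\<integral>\<^sup>+p. ennreal (exchange_kernel (t (fst p)) (t (snd p))) \<partial>(lborel \<Otimes>\<^sub>M lborel))"

definition exchange_energy :: "('a::euclidean_space \<Rightarrow> real) \<Rightarrow> real" where
  "exchange_energy t = (\<integral>p. exchange_kernel (t (fst p)) (t (snd p)) \<partial>(lborel \<Otimes>\<^sub>M lborel))"

lemma exchange_energy_eq_enn2real: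
  assumes [measurable]: "t \<in> borel_measurable lborel" and "\<And>x. 0 \<le> t x"
  shows "exchange_energy t = enn2real (nn_exchange_energy t)"
  unfolding exchange_energy_def nn_exchange_energy_def
  using assms by (intro integral_eq_nn_integral) (auto intro: exchange_kernel_nonneg)

lemma nn_exchange_energy_eq_excess_mass:
  fixes t :: "'a::euclidean_space \<Rightarrow> real"
  assumes [measurable]: "t \<in> borel_measurable lborel" and t: "\<And>x. 0 \<le> t x"
  shows "nn_exchange_energy t = ennreal (3/4) * (\<integral>\<^sup>+u. excess_mass t u ^ 2 \<partial>lborel)"
proof -
  let ?e = "\<lambda>x u. ennreal (max 0 (t x - u^2))"
  have kernel:
    "ennreal (exchange_kernel (t x) (t y)) = ennreal (3/4) * (\<integral>\<^sup>+u. ?e x u * ?e y u \<partial>lborel)" for x y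
    using exchange_kernel_layer_integral[OF t t, of x y] exchange_kernel_nonneg[OF t t, of x y]
    by (simp add: ennreal_mult[symmetric])
  have "nn_exchange_energy t
      = ennreal (3/4) * (\<integral>\<^sup>+p. \<integral>\<^sup>+u. ?e (fst p) u * ?e (snd p) u \<partial>lborel \<partial>(lborel \<Otimes>\<^sub>M lborel))"
    unfolding nn_exchange_energy_def kernel by (rule nn_integral_cmult) measurable
  also have "(\<integral>\<^sup>+p. \<integral>\<^sup>+u. ?e (fst p) u * ?e (snd p) u \<partial>lborel \<partial>(lborel \<Otimes>\<^sub>M lborel))
      = (\<integral>\<^sup>+u. \<integral>\<^sup>+p. ?e (fst p) u * ?e (snd p) u \<partial>(lborel \<Otimes>\<^sub>M lborel) \<partial>lborel)"
  proof -
    interpret pair_sigma_finite "lborel \<Otimes>\<^sub>M lborel :: ('a \<times> 'a) measure" "lborel :: real measure"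
      by (intro pair_sigma_finite.intro sigma_finite_pair_measure lborel.sigma_finite_measure_axioms)
    show ?thesis by (rule Fubini'[symmetric]) measurable
  qed
  also have "\<dots> = (\<integral>\<^sup>+u. excess_mass t u ^ 2 \<partial>lborel)"
    unfolding excess_mass_def power2_eq_square
    by (intro nn_integral_cong lborel_pair.nn_integral_fst_snd_mult) measurable
  finally show ?thesis .
qed

lemma excess_mass_convex:
  fixes t1 t2 :: "'a::euclidean_space \<Rightarrow> real"
  assumes [measurable]: "t1 \<in> borel_measurable lborel" "t2 \<in> borel_measurable lborel"
    and s: "0 \<le> s" "s \<le> 1"
  shows "excess_mass (\<lambda>x. s * t1 x + (1-s) * t2 x) u
    \<le> ennreal s * excess_mass t1 u + ennreal (1-s) * excess_mass t2 u"
proof -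
  have "ennreal (max 0 (s * a + (1-s) * b - u^2))
      \<le> ennreal s * ennreal (max 0 (a - u^2)) + ennreal (1-s) * ennreal (max 0 (b - u^2))" for a b
  proof -
    have "s * a + (1-s) * b - u^2 = s * (a - u^2) + (1-s) * (b - u^2)" by (simp add: algebra_simps)
    then have "max 0 (s * a + (1-s) * b - u^2) \<le> s * max 0 (a - u^2) + (1-s) * max 0 (b - u^2)"
      using s by (simp add: add_mono mult_left_mono)
    then show ?thesis
      using s by (simp add: ennreal_mult[symmetric] ennreal_plus[symmetric] ennreal_leI del: ennreal_plus)
  qed
  then have "excess_mass (\<lambda>x. s * t1 x + (1-s) * t2 x) u
      \<le> (\<integral>\<^sup>+x. ennreal s * ennreal (max 0 (t1 x - u^2))
            + ennreal (1-s) * ennreal (max 0 (t2 x - u^2)) \<partial>lborel)"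
    unfolding excess_mass_def by (intro nn_integral_mono)
  also have "\<dots> = ennreal s * excess_mass t1 u + ennreal (1-s) * excess_mass t2 u"
    unfolding excess_mass_def by (simp add: nn_integral_add nn_integral_cmult)
  finally show ?thesis .
qed

lemma ennreal_power2_le_convex_combination:
  fixes X A B :: ennreal and s :: real
  assumes s: "0 < s" "s < 1" and X: "X \<le> ennreal s * A + ennreal (1-s) * B"
  shows "X^2 \<le> ennreal s * A^2 + ennreal (1-s) * B^2"
proof (cases "A = \<infinity> \<or> B = \<infinity>")
  case True
  then show ?thesis using s by (auto simp: ennreal_mult_top ennreal_top_mult power2_eq_square)
next
  case False
  then obtain a b where ab: "A = ennreal a" "B = ennreal b" "0 \<le> a" "0 \<le> b"
    by (cases A; cases B) auto
  have "X^2 \<le> (ennreal (s * a + (1-s) * b))^2"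
    using X s ab
    by (intro power_mono) (simp_all add: ennreal_mult[symmetric] ennreal_plus[symmetric] del: ennreal_plus)
  also have "\<dots> \<le> ennreal (s * a^2 + (1-s) * b^2)"
  proof -
    have "s * a^2 + (1-s) * b^2 - (s * a + (1-s) * b)^2 = s * (1-s) * (a - b)^2"
      by (simp add: algebra_simps power2_eq_square)
    moreover have "0 \<le> s * (1-s) * (a - b)^2" using s by simp
    ultimately have "(s * a + (1-s) * b)^2 \<le> s * a^2 + (1-s) * b^2" by linarith
    then show ?thesis using s ab by (simp add: ennreal_power ennreal_leI del: ennreal_plus)
  qed
  also have "\<dots> = ennreal s * A^2 + ennreal (1-s) * B^2"
    using s ab by (simp add: ennreal_mult[symmetric] ennreal_plus[symmetric] ennreal_power del: ennreal_plus)
  finally show ?thesis .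
qed

lemma nn_exchange_energy_convex:
  fixes t1 t2 :: "'a::euclidean_space \<Rightarrow> real"
  assumes [measurable]: "t1 \<in> borel_measurable lborel" "t2 \<in> borel_measurable lborel"
    and t1: "\<And>x. 0 \<le> t1 x" and t2: "\<And>x. 0 \<le> t2 x" and s: "0 < s" "s < 1"
  shows "nn_exchange_energy (\<lambda>x. s * t1 x + (1-s) * t2 x)
    \<le> ennreal s * nn_exchange_energy t1 + ennreal (1-s) * nn_exchange_energy t2"
proof -
  let ?t = "\<lambda>x. s * t1 x + (1-s) * t2 x"
  have "nn_exchange_energy ?t = ennreal (3/4) * (\<integral>\<^sup>+u. excess_mass ?t u ^ 2 \<partial>lborel)"
    using t1 t2 s by (intro nn_exchange_energy_eq_excess_mass) auto
  also have "\<dots> \<le> ennreal (3/4) *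
      (\<integral>\<^sup>+u. ennreal s * excess_mass t1 u ^ 2 + ennreal (1-s) * excess_mass t2 u ^ 2 \<partial>lborel)"
    using s
    by (intro mult_left_mono nn_integral_mono ennreal_power2_le_convex_combination excess_mass_convex) auto
  also have "\<dots> = ennreal s * nn_exchange_energy t1 + ennreal (1-s) * nn_exchange_energy t2"
    unfolding nn_exchange_energy_eq_excess_mass[OF assms(1) t1]
      nn_exchange_energy_eq_excess_mass[OF assms(2) t2]
    by (simp add: nn_integral_add nn_integral_cmult excess_mass_def distrib_left ac_simps)
  finally show ?thesis .
qed

lemma nn_exchange_energy_finite:
  fixes t :: "'a::euclidean_space \<Rightarrow> real"
  assumes [measurable]: "t \<in> borel_measurable lborel" and t: "\<And>x. 0 \<le> t x"
    and "integrable lborel t" "integrable lborel (\<lambda>x. t x powr (3/2))"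
  shows "nn_exchange_energy t < \<infinity>"
proof -
  let ?T = "\<lambda>x. ennreal (t x)" and ?P = "\<lambda>x. ennreal (t x powr (3/2))"
  have "nn_exchange_energy t
      \<le> (\<integral>\<^sup>+p. ?P (fst p) * ?T (snd p) + ?T (fst p) * ?P (snd p) \<partial>(lborel \<Otimes>\<^sub>M lborel))"
    unfolding nn_exchange_energy_def using exchange_kernel_le[OF t t] t
    by (intro nn_integral_mono)
      (simp add: ennreal_mult[symmetric] ennreal_plus[symmetric] mult.commute ennreal_leI del: ennreal_plus)
  also have "\<dots> = (\<integral>\<^sup>+p. ?P (fst p) * ?T (snd p) \<partial>(lborel \<Otimes>\<^sub>M lborel))
      + (\<integral>\<^sup>+p. ?T (fst p) * ?P (snd p) \<partial>(lborel \<Otimes>\<^sub>M lborel))"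
    by (rule nn_integral_add) measurable
  also have "\<dots> = (\<integral>\<^sup>+x. ?P x \<partial>lborel) * (\<integral>\<^sup>+x. ?T x \<partial>lborel)
      + (\<integral>\<^sup>+x. ?T x \<partial>lborel) * (\<integral>\<^sup>+x. ?P x \<partial>lborel)"
  proof -
    have m: "?P \<in> borel_measurable lborel" "?T \<in> borel_measurable lborel" by measurable
    show ?thesis
      by (simp only: lborel_pair.nn_integral_fst_snd_mult[OF m]
          lborel_pair.nn_integral_fst_snd_mult[OF m(2,1)])
  qed
  also have "\<dots> < \<infinity>"
    using assms(3,4) t by (simp add: integrable_iff_bounded ennreal_mult_less_top)
  finally show ?thesis .
qed

lemma exchange_energy_convex:
  fixes t1 t2 :: "'a::euclidean_space \<Rightarrow> real"
  assumes [measurable]: "t1 \<in> borel_measurable lborel" "t2 \<in> borel_measurable lborel"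
    and t1: "\<And>x. 0 \<le> t1 x" "integrable lborel t1" "integrable lborel (\<lambda>x. t1 x powr (3/2))"
    and t2: "\<And>x. 0 \<le> t2 x" "integrable lborel t2" "integrable lborel (\<lambda>x. t2 x powr (3/2))"
    and s: "0 < s" "s < 1"
  shows "exchange_energy (\<lambda>x. s * t1 x + (1-s) * t2 x)
    \<le> s * exchange_energy t1 + (1-s) * exchange_energy t2"
proof -
  let ?t = "\<lambda>x. s * t1 x + (1-s) * t2 x"
  have "0 \<le> ?t x" for x using t1(1) t2(1) s by simp
  then have energy: "exchange_energy ?t = enn2real (nn_exchange_energy ?t)"
    by (intro exchange_energy_eq_enn2real) measurable
  have finite: "nn_exchange_energy t1 < \<infinity>" "nn_exchange_energy t2 < \<infinity>"
    using nn_exchange_energy_finite[OF assms(1) t1] nn_exchange_energy_finite[OF assms(2) t2] .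
  then have "ennreal s * nn_exchange_energy t1 + ennreal (1-s) * nn_exchange_energy t2 < top"
    by (simp add: ennreal_mult_less_top)
  with nn_exchange_energy_convex[OF assms(1,2) t1(1) t2(1) s]
  have "enn2real (nn_exchange_energy ?t)
      \<le> enn2real (ennreal s * nn_exchange_energy t1 + ennreal (1-s) * nn_exchange_energy t2)"
    by (rule enn2real_mono)
  also have "\<dots> = s * enn2real (nn_exchange_energy t1) + (1-s) * enn2real (nn_exchange_energy t2)"
    using finite s by (simp add: enn2real_plus enn2real_mult ennreal_mult_less_top)
  finally show ?thesis
    by (simp only: energy exchange_energy_eq_enn2real[OF assms(1) t1(1)]
        exchange_energy_eq_enn2real[OF assms(2) t2(1)])
qed

subsection \<open>Convexity of the kinetic energy\<close>

lemma integrable_powr_three_halves_convex_combination: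
  fixes t1 t2 w :: "'a \<Rightarrow> real"
  assumes [measurable]: "t1 \<in> borel_measurable M" "t2 \<in> borel_measurable M" "w \<in> borel_measurable M"
    and t: "\<And>x. 0 \<le> t1 x" "\<And>x. 0 \<le> t2 x" and w: "AE x in M. 0 \<le> w x"
    and "integrable M (\<lambda>x. w x * t1 x powr (3/2))" "integrable M (\<lambda>x. w x * t2 x powr (3/2))"
    and s: "0 \<le> s" "s \<le> 1"
  shows "integrable M (\<lambda>x. w x * (s * t1 x + (1-s) * t2 x) powr (3/2))"
proof (rule Bochner_Integration.integrable_bound)
  show "integrable M (\<lambda>x. s * (w x * t1 x powr (3/2)) + (1-s) * (w x * t2 x powr (3/2)))"
    using assms by auto
  show "AE x in M. norm (w x * (s * t1 x + (1-s) * t2 x) powr (3/2))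
      \<le> norm (s * (w x * t1 x powr (3/2)) + (1-s) * (w x * t2 x powr (3/2)))"
    using w
  proof eventually_elim
    case (elim x)
    have "w x * (s * t1 x + (1-s) * t2 x) powr (3/2)
        \<le> w x * (s * t1 x powr (3/2) + (1-s) * t2 x powr (3/2))"
      using elim t s by (intro mult_left_mono powr_three_halves_convex) auto
    then show ?case using elim s by (simp add: algebra_simps)
  qed
qed measurable

lemma integral_powr_three_halves_strict_convex:
  fixes t1 t2 w :: "'a \<Rightarrow> real"
  assumes [measurable]: "t1 \<in> borel_measurable M" "t2 \<in> borel_measurable M" "w \<in> borel_measurable M"
    and t: "\<And>x. 0 \<le> t1 x" "\<And>x. 0 \<le> t2 x" and w: "AE x in M. 0 < w x"
    and int: "integrable M (\<lambda>x. w x * t1 x powr (3/2))" "integrable M (\<lambda>x. w x * t2 x powr (3/2))"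
    and ne: "\<not> (AE x in M. t1 x = t2 x)" and s: "0 < s" "s < 1"
  shows "(\<integral>x. w x * (s * t1 x + (1-s) * t2 x) powr (3/2) \<partial>M)
    < s * (\<integral>x. w x * t1 x powr (3/2) \<partial>M) + (1-s) * (\<integral>x. w x * t2 x powr (3/2) \<partial>M)"
proof -
  let ?h = "\<lambda>x. w x * (s * t1 x + (1-s) * t2 x) powr (3/2)"
  define d where "d x = s * (w x * t1 x powr (3/2)) + (1-s) * (w x * t2 x powr (3/2)) - ?h x" for x
  have "integrable M ?h"
    using w s
    by (intro integrable_powr_three_halves_convex_combination[OF _ _ _ t _ int]) (auto elim: AE_mp)
  then have "integrable M d" unfolding d_def using int by auto
  have d: "d x = w x * (s * t1 x powr (3/2) + (1-s) * t2 x powr (3/2)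
      - (s * t1 x + (1-s) * t2 x) powr (3/2))" for x
    by (simp add: d_def algebra_simps)
  have "AE x in M. 0 \<le> d x \<and> (t1 x \<noteq> t2 x \<longrightarrow> 0 < d x)"
    using w
  proof eventually_elim
    case (elim x)
    then show ?case
      unfolding d
      using t s powr_three_halves_convex[of "t1 x" "t2 x" s] powr_three_halves_strict_convex[of "t1 x" "t2 x" s]
      by (auto intro: mult_nonneg_nonneg mult_pos_pos)
  qed
  then have "AE x in M. 0 \<le> d x" and pos: "AE x in M. t1 x \<noteq> t2 x \<longrightarrow> 0 < d x"
    by auto
  have "(\<integral>x. d x \<partial>M) \<noteq> 0"
  proof
    assume "(\<integral>x. d x \<partial>M) = 0"
    then have "AE x in M. d x = 0"
      using integral_nonneg_eq_0_iff_AE[OF \<open>integrable M d\<close> \<open>AE x in M. 0 \<le> d x\<close>] by simp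
    with pos have "AE x in M. t1 x = t2 x" by eventually_elim auto
    with ne show False ..
  qed
  then have "0 < (\<integral>x. d x \<partial>M)"
    using integral_nonneg_AE[OF \<open>AE x in M. 0 \<le> d x\<close>] by linarith
  then show ?thesis unfolding d_def using int \<open>integrable M ?h\<close> by simp
qed

lemma admissible_iff:
  "admissible t \<longleftrightarrow> t \<in> borel_measurable lborel \<and> (\<forall>\<xi>. 0 \<le> t \<xi>)
    \<and> integrable lborel (\<lambda>\<xi>. (1 + (norm \<xi>)^2) * t \<xi> powr (3/2))"
  unfolding admissible_def by (simp cong: conj_cong)

lemma admissible_integrable:
  assumes "admissible t"
  shows "integrable lborel (\<lambda>\<xi>. (norm \<xi>)^2 * t \<xi> powr (3/2))"
    and "integrable lborel (\<lambda>\<xi>. t \<xi> powr (3/2))" and "integrable lborel t"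
proof -
  have [measurable]: "t \<in> borel_measurable lborel" and t: "\<And>\<xi>. 0 \<le> t \<xi>"
    and int: "integrable lborel (\<lambda>\<xi>. (1 + (norm \<xi>)^2) * t \<xi> powr (3/2))"
    using assms by (auto simp: admissible_iff)
  show "integrable lborel (\<lambda>\<xi>. (norm \<xi>)^2 * t \<xi> powr (3/2))"
    by (rule Bochner_Integration.integrable_bound[OF int]) (auto intro!: mult_right_mono)
  show "integrable lborel (\<lambda>\<xi>. t \<xi> powr (3/2))"
    by (rule Bochner_Integration.integrable_bound[OF int]) (auto simp: distrib_right)
  show "integrable lborel t"
  proof (rule Bochner_Integration.integrable_bound)
    show "integrable lborel (\<lambda>\<xi>. (1 + (norm \<xi>)^2) * t \<xi> powr (3/2) + 1 / (1 + (norm \<xi>)^2)^2)"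
      using int integrable_inverse_one_plus_norm_square_squared[where 'a="real^3"] by simp
    show "AE \<xi> in lborel. norm (t \<xi>) \<le> norm ((1 + (norm \<xi>)^2) * t \<xi> powr (3/2) + 1 / (1 + (norm \<xi>)^2)^2)"
      using t le_powr_three_halves_plus_inverse_square[OF t, of "1 + (norm _)^2"]
      by (auto simp: add_pos_nonneg)
  qed measurable
qed

lemma admissible_convex_combination:
  assumes "admissible t1" "admissible t2" "0 \<le> s" "s \<le> 1"
  shows "admissible (\<lambda>\<xi>. s * t1 \<xi> + (1-s) * t2 \<xi>)"
proof -
  have [measurable]: "t1 \<in> borel_measurable lborel" "t2 \<in> borel_measurable lborel"
    using assms by (simp_all add: admissible_iff)
  show ?thesis
    using assms integrable_powr_three_halves_convex_combination[of t1 lborel t2 "\<lambda>\<xi>. 1 + (norm \<xi>)^2"]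
    by (simp add: admissible_iff)
qed

lemma E_s_eq:
  assumes "\<And>\<xi>. 0 \<le> t \<xi>"
  shows "E_s q Z t = (\<integral>\<xi>. (norm \<xi>)^2 * t \<xi> powr (3/2) \<partial>lborel)
    - 3/2 * gamma_q q powr (-1/2) * Z * (\<integral>\<xi>. t \<xi> \<partial>lborel)
    + 3/4 * gamma_q q powr (-1/2) * exchange_energy t"
proof -
  have kernel: "min (t (fst p) powr (3/2)) (t (snd p) powr (3/2))
        * max (t (fst p) powr (3/2)) (t (snd p) powr (3/2)) powr (2/3)
      - 1/5 * min (t (fst p) powr (3/2)) (t (snd p) powr (3/2)) powr (5/3)
      = exchange_kernel (t (fst p)) (t (snd p))" for p
    by (rule min_max_powr_eq_exchange_kernel[OF assms assms])
  show ?thesis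
    using assms unfolding E_s_def E_mTF_def exchange_energy_def kernel by (simp add: powr_powr)
qed

theorem lemma3:
  fixes q :: nat and Z :: real and t1 t2 :: "real^3 \<Rightarrow> real" and s :: real
  assumes "q > 0" and "Z > 0"
    and "admissible t1" and "admissible t2"
    and "\<not> (AE \<xi> in lborel. t1 \<xi> = t2 \<xi>)"
    and "0 < s" and "s < 1"
  shows "admissible (\<lambda>\<xi>. s * t1 \<xi> + (1 - s) * t2 \<xi>)
    \<and> E_s q Z (\<lambda>\<xi>. s * t1 \<xi> + (1 - s) * t2 \<xi>) < s * E_s q Z t1 + (1 - s) * E_s q Z t2"
proof -
  note adm = \<open>admissible t1\<close> \<open>admissible t2\<close>
  note [measurable] = adm[unfolded admissible_iff, THEN conjunct1]
  have t: "\<And>\<xi>. 0 \<le> t1 \<xi>" "\<And>\<xi>. 0 \<le> t2 \<xi>" using adm by (auto simp: admissible_iff)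
  let ?t = "\<lambda>\<xi>. s * t1 \<xi> + (1 - s) * t2 \<xi>"
  let ?K = "\<lambda>t. \<integral>\<xi>. (norm \<xi>)^2 * t \<xi> powr (3/2) \<partial>lborel"
    and ?L = "\<lambda>t. \<integral>\<xi>. t \<xi> \<partial>lborel" and ?X = exchange_energy
  have kinetic: "?K ?t < s * ?K t1 + (1-s) * ?K t2"
    using adm assms(5-7) AE_lborel_singleton[of 0]
    by (intro integral_powr_three_halves_strict_convex t admissible_integrable) (auto elim: AE_mp)
  have linear: "?L ?t = s * ?L t1 + (1-s) * ?L t2"
    using admissible_integrable(3)[OF adm(1)] admissible_integrable(3)[OF adm(2)] by simp
  have exchange: "?X ?t \<le> s * ?X t1 + (1-s) * ?X t2"
    using adm assms(6,7) by (intro exchange_energy_convex t admissible_integrable) measurable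
  define G where "G = gamma_q q powr (-1/2)"
  have "0 \<le> ?t \<xi>" for \<xi> using t assms(6,7) by simp
  then have "E_s q Z ?t = ?K ?t - 3/2 * G * Z * (s * ?L t1 + (1-s) * ?L t2) + 3/4 * G * ?X ?t"
    by (simp only: E_s_eq G_def linear)
  moreover have "s * E_s q Z t1 + (1-s) * E_s q Z t2
      = (s * ?K t1 + (1-s) * ?K t2) - 3/2 * G * Z * (s * ?L t1 + (1-s) * ?L t2)
        + 3/4 * G * (s * ?X t1 + (1-s) * ?X t2)"
    unfolding E_s_eq[OF t(1)] E_s_eq[OF t(2)] G_def[symmetric] by (simp add: field_simps)
  moreover have "3/4 * G * ?X ?t \<le> 3/4 * G * (s * ?X t1 + (1-s) * ?X t2)"
    using exchange by (intro mult_left_mono) (simp_all add: G_def)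
  ultimately show ?thesis
    using kinetic admissible_convex_combination[OF adm] assms(6,7) by simp
qed

end
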